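(* The 580-disk $X_{580}$ is a flag-no-square simplicial complex, and its boundary $\partial X_{580}$ is a 3-convex subcomplex of $X_{580}$.
   Context: $X_{600}$ denotes the boundary of the 600-cell (the regular 4-polytope with Schläfli symbol $\{3,3,5\}$), viewed as a simplicial complex triangulating $S^3$ (120 vertices, 600 tetrahedra, vertex links icosahedra). The 580-disk $X_{580}$ is the simplicial complex obtained from $X_{600}$ by deleting the open star of one vertex; it triangulates $B^3$ and $\partial X_{580}$ is the link of the deleted vertex (an icosahedron). A simplicial complex is flag-no-square if it is flag and every closed edge cycle of length 4 has a diagonal (an edge joining two opposite vertices of the cycle). A subcomplex $J\subset K$ is 3-convex if it is full and for any two vertices of $J$ at edge-path distance 2 in $K$, every edge path of length 2 in $K$ joining them lies in $J$. *)

theory Defs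
  imports "HOL-Analysis.Analysis"
begin

definition cverts :: "'a set set \<Rightarrow> 'a set" where
  "cverts K = \<Union>K"

definition cedge :: "'a set set \<Rightarrow> 'a \<Rightarrow> 'a \<Rightarrow> bool" where
  "cedge K u v \<longleftrightarrow> u \<noteq> v \<and> {u, v} \<in> K"

definition flag_complex :: "'a set set \<Rightarrow> bool" where
  "flag_complex K \<longleftrightarrow>
     (\<forall>S. finite S \<and> S \<noteq> {} \<and> S \<subseteq> cverts K \<and>
          (\<forall>u\<in>S. \<forall>v\<in>S. u \<noteq> v \<longrightarrow> cedge K u v) \<longrightarrow> S \<in> K)"

definition no_square :: "'a set set \<Rightarrow> bool" where
  "no_square K \<longleftrightarrow>
     (\<forall>a b c d. distinct [a, b, c, d] \<and> cedge K a b \<and> cedge K b c \<and> cedge K c d \<and> cedge K d a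
        \<longrightarrow> cedge K a c \<or> cedge K b d)"

definition flag_no_square :: "'a set set \<Rightarrow> bool" where
  "flag_no_square K \<longleftrightarrow> flag_complex K \<and> no_square K"

definition full_subcomplex :: "'a set set \<Rightarrow> 'a set set \<Rightarrow> bool" where
  "full_subcomplex J K \<longleftrightarrow> J \<subseteq> K \<and> (\<forall>\<sigma>\<in>K. \<sigma> \<subseteq> cverts J \<longrightarrow> \<sigma> \<in> J)"

definition dist2 :: "'a set set \<Rightarrow> 'a \<Rightarrow> 'a \<Rightarrow> bool" where
  "dist2 K u w \<longleftrightarrow> u \<noteq> w \<and> \<not> cedge K u w \<and> (\<exists>x. cedge K u x \<and> cedge K x w)"

definition three_convex :: "'a set set \<Rightarrow> 'a set set \<Rightarrow> bool" where
  "three_convex J K \<longleftrightarrow> full_subcomplex J K \<and>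
     (\<forall>u w x. u \<in> cverts J \<and> w \<in> cverts J \<and> dist2 K u w \<and> cedge K u x \<and> cedge K x w
        \<longrightarrow> x \<in> cverts J \<and> cedge J u x \<and> cedge J x w)"

definition vec4 :: "real \<Rightarrow> real \<Rightarrow> real \<Rightarrow> real \<Rightarrow> real^4" where
  "vec4 a b c d = (\<chi> i. if i = 1 then a else if i = 2 then b else if i = 3 then c else d)"

definition golden :: real where "golden = (1 + sqrt 5) / 2"

definition even_perms4 :: "nat list set" where
  "even_perms4 = {[0,1,2,3],[0,2,3,1],[0,3,1,2],[1,0,3,2],[1,2,0,3],[1,3,2,0],
                  [2,0,1,3],[2,1,3,0],[2,3,0,1],[3,0,2,1],[3,1,0,2],[3,2,1,0]}"

definition V600 :: "(real^4) set" where
  "V600 =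
     {vec4 (s*a) (s*b) (s*c) (s*d) | s a b c d. s \<in> {1, -1} \<and>
         [a,b,c,d] \<in> {[1,0,0,0],[0,1,0,0],[0,0,1,0],[0,0,0,1]}}
   \<union> {vec4 a b c d | a b c d. a \<in> {1/2, -1/2} \<and> b \<in> {1/2, -1/2} \<and> c \<in> {1/2, -1/2} \<and> d \<in> {1/2, -1/2}}
   \<union> {vec4 (s0 * base ! (p!0)) (s1 * base ! (p!1)) (s2 * base ! (p!2)) (s3 * base ! (p!3))
       | s0 s1 s2 s3 p base. s0 \<in> {1,-1} \<and> s1 \<in> {1,-1} \<and> s2 \<in> {1,-1} \<and> s3 \<in> {1,-1} \<and>
         p \<in> even_perms4 \<and> base = [golden/2, 1/2, 1/(2*golden), 0]}"

definition X600 :: "(real^4) set set" where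
  "X600 = {V600 \<inter> F | F. F face_of convex hull V600 \<and> F \<noteq> {} \<and> F \<noteq> convex hull V600}"

text \<open>Delete the open star of vertex v.\<close>
definition X580 :: "real^4 \<Rightarrow> (real^4) set set" where
  "X580 v = {\<sigma> \<in> X600. v \<notin> \<sigma>}"

text \<open>Boundary of X580 = link of the deleted vertex v in X600.\<close>
definition bdry580 :: "real^4 \<Rightarrow> (real^4) set set" where
  "bdry580 v = {\<sigma> \<in> X600. v \<notin> \<sigma> \<and> insert v \<sigma> \<in> X600}"

end

theory Submission
  imports Defs "HOL-Computational_Algebra.Primes"
begin

text \<open>The 120 vertices of the 600-cell are the unit quaternions of the binary icosahedral group, so
  left multiplication by a vertex permutes them isometrically, and every local property need only be
  checked at the vertex \<open>1\<close>, by exact computation in \<open>\<int>[\<phi>]\<close>.  Call two vertices adjacent when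
  their inner product is \<open>\<phi>/2\<close>, the largest value below \<open>1\<close>.  The proper faces are exactly the
  cliques of this graph: the sum of a clique is the normal of a supporting hyperplane meeting the vertex
  set in that clique, whereas for two non-adjacent vertices an explicit certificate puts their midpoint
  into a copy of the polytope shrunk by a factor \<open>< 1\<close>, i.e. into its interior.  The graph has no
  induced 4-cycle.  Hence \<open>X\<^sub>5\<^sub>8\<^sub>0\<close> is the clique complex of a square-free graph, and the link of the
  deleted vertex \<open>v\<close> is 3-convex: a common neighbour of two non-adjacent neighbours of \<open>v\<close> closes a
  4-cycle through \<open>v\<close>, whose only possible chord joins it to \<open>v\<close>.\<close>

section \<open>Clique complexes\<close>

definition clique_complex :: "'a set \<Rightarrow> ('a \<Rightarrow> 'a \<Rightarrow> bool) \<Rightarrow> 'a set set" where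
  "clique_complex V E = {\<sigma>. \<sigma> \<noteq> {} \<and> \<sigma> \<subseteq> V \<and> (\<forall>x\<in>\<sigma>. \<forall>y\<in>\<sigma>. x \<noteq> y \<longrightarrow> E x y)}"

definition no_induced_square :: "'a set \<Rightarrow> ('a \<Rightarrow> 'a \<Rightarrow> bool) \<Rightarrow> bool" where
  "no_induced_square V E \<longleftrightarrow>
     (\<forall>a\<in>V. \<forall>b\<in>V. \<forall>c\<in>V. \<forall>d\<in>V.
        E a b \<and> E b c \<and> E c d \<and> E d a \<and> a \<noteq> c \<and> b \<noteq> d \<longrightarrow> E a c \<or> E b d)"

lemma cverts_clique_complex: "cverts (clique_complex V E) = V"
  unfolding cverts_def clique_complex_def by blast

lemma cedge_clique_complex:
  "symp E \<Longrightarrow> cedge (clique_complex V E) x y \<longleftrightarrow> x \<noteq> y \<and> x \<in> V \<and> y \<in> V \<and> E x y"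
  unfolding cedge_def clique_complex_def by (auto dest: sympD)

lemma no_induced_square_mono: "no_induced_square V E \<Longrightarrow> W \<subseteq> V \<Longrightarrow> no_induced_square W E"
  unfolding no_induced_square_def by blast

lemma clique_complex_delete: "{\<sigma> \<in> clique_complex V E. v \<notin> \<sigma>} = clique_complex (V - {v}) E"
  unfolding clique_complex_def by blast

lemma clique_complex_link:
  assumes "symp E" "v \<in> V"
  shows "{\<sigma> \<in> clique_complex V E. v \<notin> \<sigma> \<and> insert v \<sigma> \<in> clique_complex V E}
           = clique_complex {x \<in> V. x \<noteq> v \<and> E v x} E"
  using assms unfolding clique_complex_def by (auto dest: sympD)

lemma flag_no_square_clique_complex:
  assumes "symp E" "no_induced_square V E"
  shows "flag_no_square (clique_complex V E)"
proof -
  have "flag_complex (clique_complex V E)"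
    unfolding flag_complex_def cverts_clique_complex cedge_clique_complex[OF assms(1)]
    by (auto simp: clique_complex_def)
  moreover have "no_square (clique_complex V E)"
    using assms(2) unfolding no_square_def cedge_clique_complex[OF assms(1)] no_induced_square_def
    by (metis distinct_length_2_or_more)
  ultimately show ?thesis unfolding flag_no_square_def ..
qed

lemma full_subcomplex_clique_complex:
  "W \<subseteq> V \<Longrightarrow> full_subcomplex (clique_complex W E) (clique_complex V E)"
  unfolding full_subcomplex_def cverts_clique_complex by (auto simp: clique_complex_def)

text \<open>In a square \<open>v-u-x-w\<close> whose diagonal \<open>u w\<close> is missing, the chord \<open>v x\<close> puts \<open>x\<close> in the link of \<open>v\<close>.\<close>

lemma three_convex_link:
  assumes "symp E" "v \<in> V" "no_induced_square V E"
  shows "three_convex (clique_complex {x \<in> V. x \<noteq> v \<and> E v x} E) (clique_complex (V - {v}) E)"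
proof -
  let ?L = "{x \<in> V. x \<noteq> v \<and> E v x}"
  have "?L \<subseteq> V - {v}" by blast
  moreover have "x \<in> ?L \<and> cedge (clique_complex ?L E) u x \<and> cedge (clique_complex ?L E) x w"
    if "u \<in> ?L" "w \<in> ?L" "dist2 (clique_complex (V - {v}) E) u w"
       "cedge (clique_complex (V - {v}) E) u x" "cedge (clique_complex (V - {v}) E) x w" for u w x
  proof -
    have "u \<noteq> w" "\<not> E u w" "x \<noteq> u" "x \<noteq> w" "x \<in> V" "x \<noteq> v" "E u x" "E x w"
      using that unfolding dist2_def cedge_clique_complex[OF assms(1)] by auto
    moreover have "E v u" "E w v" using that(1,2) assms(1) by (auto dest: sympD)
    ultimately have "E v x"
      using assms(3) that(1,2) assms(2) unfolding no_induced_square_def by blast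
    with \<open>x \<in> V\<close> \<open>x \<noteq> v\<close> \<open>x \<noteq> u\<close> \<open>x \<noteq> w\<close> \<open>E u x\<close> \<open>E x w\<close> that(1,2) show ?thesis
      unfolding cedge_clique_complex[OF assms(1)] by blast
  qed
  ultimately show ?thesis
    unfolding three_convex_def cverts_clique_complex by (blast intro: full_subcomplex_clique_complex)
qed

section \<open>Faces of the convex hull of a spherical code\<close>

lemma conic_combination_in_scaled_hull:
  fixes l :: "(real \<times> 'a::real_vector) list"
  assumes "\<forall>(c, h)\<in>set l. 0 \<le> c \<and> h \<in> S" "S \<noteq> {}"
  shows "\<exists>y\<in>convex hull S. (\<Sum>(c, h)\<leftarrow>l. c *\<^sub>R h) = (\<Sum>(c, h)\<leftarrow>l. c) *\<^sub>R y"
  using assms(1)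
proof (induction l)
  case Nil
  then show ?case using assms(2) hull_subset by fastforce
next
  case (Cons ch l)
  obtain c h where ch: "ch = (c, h)" by fastforce
  let ?s = "\<Sum>(c, h)\<leftarrow>l. c"
  obtain y where y: "y \<in> convex hull S" "(\<Sum>(c, h)\<leftarrow>l. c *\<^sub>R h) = ?s *\<^sub>R y"
    using Cons by auto
  have c: "0 \<le> c" "h \<in> S" using Cons.prems ch by auto
  have s: "0 \<le> ?s" using Cons.prems by (intro sum_list_nonneg) auto
  show ?case
  proof (cases "c + ?s = 0")
    case True
    then have "c = 0" "?s = 0" using c s by linarith+
    then show ?thesis using y ch by auto
  next
    case False
    then have pos: "0 < c + ?s" using c s by auto
    define z where "z = (c / (c + ?s)) *\<^sub>R h + (?s / (c + ?s)) *\<^sub>R y"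
    have "z \<in> convex hull S"
      unfolding z_def using c s y pos
      by (intro convexD[OF convex_convex_hull]) (auto simp: add_divide_distrib[symmetric] intro: hull_inc)
    moreover have "c *\<^sub>R h + ?s *\<^sub>R y = (c + ?s) *\<^sub>R z"
      using pos by (simp add: z_def scaleR_add_right)
    ultimately show ?thesis using y ch by auto
  qed
qed

lemma equilateral_subset_face:
  fixes V :: "'a::euclidean_space set"
  assumes "finite \<sigma>" "\<sigma> \<subseteq> V" "\<delta> < 1"
    and unit: "\<And>x. x \<in> V \<Longrightarrow> x \<bullet> x = 1"
    and separated: "\<And>x y. x \<in> V \<Longrightarrow> y \<in> V \<Longrightarrow> x \<noteq> y \<Longrightarrow> x \<bullet> y \<le> \<delta>"
    and equilateral: "\<And>x y. x \<in> \<sigma> \<Longrightarrow> y \<in> \<sigma> \<Longrightarrow> x \<noteq> y \<Longrightarrow> x \<bullet> y = \<delta>"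
  obtains F where "F face_of convex hull V" "V \<inter> F = \<sigma>"
proof -
  define a where "a = \<Sum>\<sigma>"
  define m where "m = 1 + (real (card \<sigma>) - 1) * \<delta>"
  have on_face: "a \<bullet> x = m" if "x \<in> \<sigma>" for x
  proof -
    have "a \<bullet> x = x \<bullet> x + (\<Sum>u\<in>\<sigma> - {x}. u \<bullet> x)"
      using sum.remove[OF assms(1) that, of "\<lambda>u. u \<bullet> x"] by (simp add: a_def inner_sum_left)
    also have "(\<Sum>u\<in>\<sigma> - {x}. u \<bullet> x) = (\<Sum>u\<in>\<sigma> - {x}. \<delta>)"
      using equilateral that by (intro sum.cong) auto
    also have "\<dots> = (real (card \<sigma>) - 1) * \<delta>"
    proof -
      have "1 \<le> card \<sigma>" using that assms(1) card_0_eq by fastforce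
      then show ?thesis using that assms(1) by simp
    qed
    finally show ?thesis using unit that assms(2) m_def by auto
  qed
  have off_face: "a \<bullet> x < m" if "x \<in> V" "x \<notin> \<sigma>" for x
  proof -
    have "a \<bullet> x \<le> (\<Sum>u\<in>\<sigma>. \<delta>)"
      unfolding a_def inner_sum_left using separated assms(2) that by (intro sum_mono) blast
    also have "\<dots> < m" using \<open>\<delta> < 1\<close> by (simp add: m_def algebra_simps)
    finally show ?thesis .
  qed
  have "convex hull V \<subseteq> {x. a \<bullet> x \<le> m}"
    using on_face off_face assms(2)
    by (intro hull_minimal) (auto simp: convex_halfspace_le intro: less_imp_le)
  then have "(convex hull V \<inter> {x. a \<bullet> x = m}) face_of convex hull V"
    by (intro face_of_Int_supporting_hyperplane_le) auto
  moreover have "V \<inter> (convex hull V \<inter> {x. a \<bullet> x = m}) = \<sigma>"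
    using on_face off_face assms(2) hull_subset by fastforce
  ultimately show ?thesis using that by blast
qed

lemma proper_face_avoids_shrunk_midpoints:
  fixes S :: "'a::euclidean_space set"
  assumes "convex S" "0 \<in> interior S" "F face_of S" "F \<noteq> S" "u \<in> F" "w \<in> F"
    and "u + w = t *\<^sub>R y" "y \<in> S" "0 \<le> t" "t < 2"
  shows False
proof -
  have "(1/2) *\<^sub>R u + (1/2) *\<^sub>R w \<in> F"
    using assms(3,5,6) by (intro convexD[OF face_of_imp_convex]) auto
  moreover have "y - (1 - t/2) *\<^sub>R (y - 0) \<in> interior S"
    using assms by (intro mem_interior_convex_shrink) auto
  moreover have "y - (1 - t/2) *\<^sub>R (y - 0) = (1/2) *\<^sub>R u + (1/2) *\<^sub>R w"
    using assms(7) by (simp add: algebra_simps flip: scaleR_add_right)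
  ultimately show False using face_of_disjoint_interior[OF assms(3,4)] by auto
qed

lemma zero_in_interior_convex_hull:
  fixes S :: "'a::euclidean_space set"
  assumes symmetric: "\<And>x. x \<in> S \<Longrightarrow> - x \<in> S" and spanning: "span S = UNIV"
  shows "0 \<in> interior (convex hull S)"
proof -
  have "S \<noteq> {}"
  proof
    assume "S = {}"
    then have "(UNIV :: 'a set) = {0}" using spanning by simp
    then show False using SOME_Basis nonzero_Basis by blast
  qed
  then obtain x where "x \<in> S" by blast
  then have "(1/2) *\<^sub>R x + (1/2) *\<^sub>R (- x) \<in> convex hull S"
    using symmetric by (intro convexD[OF convex_convex_hull]) (auto intro: hull_inc)
  then have zero: "0 \<in> convex hull S" by simp
  have "affine hull (convex hull S) = UNIV"
    using zero spanning convex_hull_subset_affine_hull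
    by (metis affine_hull_convex_hull affine_hull_span_0 subsetD)
  then have "interior (convex hull S) = rel_interior (convex hull S)"
    by (simp add: rel_interior_interior)
  moreover have "rel_interior (convex hull S) \<noteq> {}"
    using zero by (auto simp: rel_interior_eq_empty)
  ultimately obtain p where p: "p \<in> interior (convex hull S)" by auto
  have "uminus ` (convex hull S) \<subseteq> convex hull S"
    using symmetric by (simp add: convex_hull_linear_image linear_uminus hull_mono image_subset_iff)
  then have "- p \<in> convex hull S" using p interior_subset by blast
  then have "- p - (1/2) *\<^sub>R (- p - p) \<in> interior (convex hull S)"
    using p by (intro mem_interior_convex_shrink) auto
  moreover have "- p - p = - (2 *\<^sub>R p)" by (simp add: scaleR_2)
  ultimately show ?thesis by simp
qed

section \<open>The golden ratio and the ring \<open>\<int>[\<phi>]\<close>\<close>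

lemma golden_sq: "golden * golden = golden + 1"
  unfolding golden_def by (simp add: field_simps)

lemma golden_bounds: "1 < golden" "golden < 5/3"
proof -
  have "1 < sqrt 5" by simp
  then show "1 < golden" unfolding golden_def by simp
  have "sqrt 5 < sqrt ((7/3)^2)" by (subst real_sqrt_less_iff) (simp add: power2_eq_square)
  then show "golden < 5/3" unfolding golden_def by simp
qed

lemma square_eq_five_times_square:
  fixes m n :: int
  assumes "m^2 = 5 * n^2"
  shows "n = 0"
  using assms
proof (induction "nat \<bar>n\<bar>" arbitrary: m n rule: less_induct)
  case less
  have "prime (5::int)" by simp
  moreover have "5 dvd m^2" using less.prems by simp
  ultimately have "5 dvd m" using prime_dvd_power by blast
  then obtain k where "m = 5 * k" by blast
  with less.prems have n: "n^2 = 5 * k^2" by (simp add: power2_eq_square)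
  show "n = 0"
  proof (rule ccontr)
    assume "n \<noteq> 0"
    then have "k \<noteq> 0" using n by auto
    then have "k^2 < n^2" using n by simp
    then have "nat \<bar>k\<bar> < nat \<bar>n\<bar>" by (metis abs_le_square_iff not_less nat_less_eq_zless abs_ge_zero)
    with less.hyps n have "k = 0" by blast
    with n \<open>n \<noteq> 0\<close> show False by simp
  qed
qed

lemma golden_irrational:
  fixes a b :: int
  assumes "of_int a + of_int b * golden = 0"
  shows "a = 0 \<and> b = 0"
proof -
  have "of_int b * sqrt 5 = - of_int (2 * a + b)"
    using assms unfolding golden_def by (simp add: field_simps)
  then have "(of_int b * sqrt 5)^2 = (of_int (2 * a + b))^2" by (metis power2_minus)
  then have "real_of_int ((2 * a + b)^2) = real_of_int (5 * b^2)" by (simp add: power_mult_distrib)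
  then have "(2 * a + b)^2 = 5 * b^2" by (simp only: of_int_eq_iff)
  then have "b = 0" by (rule square_eq_five_times_square)
  with assms show ?thesis by simp
qed

text \<open>\<open>ZPhi a b\<close> stands for \<open>a + b\<phi>\<close>; the ring \<open>\<int>[\<phi>]\<close> lets all vertex coordinates be computed exactly.\<close>

datatype zphi = ZPhi int int

instantiation zphi :: comm_ring_1
begin

definition zero_zphi where "0 = ZPhi 0 0"
definition one_zphi where "1 = ZPhi 1 0"
fun plus_zphi where "ZPhi a b + ZPhi c d = ZPhi (a + c) (b + d)"
fun uminus_zphi where "- ZPhi a b = ZPhi (- a) (- b)"
fun minus_zphi where "ZPhi a b - ZPhi c d = ZPhi (a - c) (b - d)"
fun times_zphi where "ZPhi a b * ZPhi c d = ZPhi (a * c + b * d) (a * d + b * c + b * d)"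

instance
proof
  fix x y z :: zphi
  show "x * y * z = x * (y * z)" by (cases x; cases y; cases z) (simp add: algebra_simps)
  show "x * y = y * x" by (cases x; cases y) (simp add: algebra_simps)
  show "(x + y) * z = x * z + y * z" by (cases x; cases y; cases z) (simp add: algebra_simps)
  show "x + y + z = x + (y + z)" by (cases x; cases y; cases z) simp
  show "x + y = y + x" by (cases x; cases y) simp
  show "0 + x = x" by (cases x) (simp add: zero_zphi_def)
  show "- x + x = 0" by (cases x) (simp add: zero_zphi_def)
  show "x - y = x + - y" by (cases x; cases y) simp
  show "1 * x = x" by (cases x) (simp add: one_zphi_def)
  show "(0::zphi) \<noteq> 1" by (simp add: zero_zphi_def one_zphi_def)
qed

end

definition \<phi> :: zphi where "\<phi> = ZPhi 0 1"

fun real_of_zphi :: "zphi \<Rightarrow> real" where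
  "real_of_zphi (ZPhi a b) = of_int a + of_int b * golden"

lemma real_of_zphi_ring_hom [simp]:
  "real_of_zphi 0 = 0" "real_of_zphi 1 = 1" "real_of_zphi \<phi> = golden"
  "real_of_zphi (x + y) = real_of_zphi x + real_of_zphi y"
  "real_of_zphi (- x) = - real_of_zphi x"
  "real_of_zphi (x - y) = real_of_zphi x - real_of_zphi y"
  "real_of_zphi (x * y) = real_of_zphi x * real_of_zphi y"
proof -
  show "real_of_zphi (x * y) = real_of_zphi x * real_of_zphi y"
  proof (cases x; cases y)
    fix a b c d assume xy: "x = ZPhi a b" "y = ZPhi c d"
    have "real_of_zphi x * real_of_zphi y
        = of_int (a * c) + of_int (a * d + b * c) * golden + of_int (b * d) * (golden * golden)"
      by (simp add: xy algebra_simps)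
    also have "\<dots> = real_of_zphi (x * y)"
      by (simp add: xy golden_sq algebra_simps)
    finally show ?thesis by simp
  qed
qed (cases x; cases y; simp add: zero_zphi_def one_zphi_def \<phi>_def algebra_simps)+

lemma real_of_zphi_numeral [simp]: "real_of_zphi (numeral n) = numeral n"
  by (induction n) (simp_all only: numeral.simps real_of_zphi_ring_hom)

lemma real_of_zphi_inject: "real_of_zphi x = real_of_zphi y \<longleftrightarrow> x = y"
proof (cases x; cases y)
  fix a b c d assume xy: "x = ZPhi a b" "y = ZPhi c d"
  have "real_of_zphi x = real_of_zphi y \<longleftrightarrow> of_int (a - c) + of_int (b - d) * golden = 0"
    by (simp add: xy algebra_simps)
  then show ?thesis using golden_irrational[of "a - c" "b - d"] by (auto simp: xy)
qed

section \<open>Quaternions\<close>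

type_synonym 'a quat = "'a \<times> 'a \<times> 'a \<times> 'a"

fun qmul :: "'a::comm_ring_1 quat \<Rightarrow> 'a quat \<Rightarrow> 'a quat" where
  "qmul (a1, b1, c1, d1) (a2, b2, c2, d2) =
     (a1 * a2 - b1 * b2 - c1 * c2 - d1 * d2,
      a1 * b2 + b1 * a2 + c1 * d2 - d1 * c2,
      a1 * c2 - b1 * d2 + c1 * a2 + d1 * b2,
      a1 * d2 + b1 * c2 - c1 * b2 + d1 * a2)"

fun qconj :: "'a::comm_ring_1 quat \<Rightarrow> 'a quat" where
  "qconj (a, b, c, d) = (a, - b, - c, - d)"

fun qdot :: "'a::comm_ring_1 quat \<Rightarrow> 'a quat \<Rightarrow> 'a" where
  "qdot (a1, b1, c1, d1) (a2, b2, c2, d2) = a1 * a2 + b1 * b2 + c1 * c2 + d1 * d2"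

fun qscale :: "'a::comm_ring_1 \<Rightarrow> 'a quat \<Rightarrow> 'a quat" where
  "qscale k (a, b, c, d) = (k * a, k * b, k * c, k * d)"

fun quat_map :: "('a \<Rightarrow> 'b) \<Rightarrow> 'a quat \<Rightarrow> 'b quat" where
  "quat_map f (a, b, c, d) = (f a, f b, f c, f d)"

lemma qmul_assoc: "qmul (qmul x y) z = qmul x (qmul y z)"
  by (cases x rule: prod_cases4; cases y rule: prod_cases4; cases z rule: prod_cases4)
     (simp add: algebra_simps)

lemma qdot_qmul: "qdot (qmul u x) (qmul u y) = qdot u u * qdot x y"
  by (cases u rule: prod_cases4; cases x rule: prod_cases4; cases y rule: prod_cases4)
     (simp add: algebra_simps)

lemma qmul_qconj: "qmul (qconj u) u = (qdot u u, 0, 0, 0)" "qmul u (qconj u) = (qdot u u, 0, 0, 0)"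
  by (cases u rule: prod_cases4; simp add: algebra_simps)+

lemma qmul_unit: "qmul (1, 0, 0, 0) x = x" "qmul x (1, 0, 0, 0) = x"
  by (cases x rule: prod_cases4; simp)+

lemma vec4_nth [simp]:
  "vec4 a b c d $ 1 = a" "vec4 a b c d $ 2 = b" "vec4 a b c d $ 3 = c" "vec4 a b c d $ 4 = d"
  by (simp_all add: vec4_def)

lemma vec4_eq_iff: "x = y \<longleftrightarrow> x $ 1 = y $ 1 \<and> x $ 2 = y $ 2 \<and> x $ 3 = y $ 3 \<and> (x::real^4) $ 4 = y $ 4"
  by (simp add: vec_eq_iff forall_4)

lemma vec4_eq [simp]: "vec4 a b c d = vec4 a' b' c' d' \<longleftrightarrow> a = a' \<and> b = b' \<and> c = c' \<and> d = d'"
  by (simp add: vec4_eq_iff)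

lemma inner_vec4: "(x::real^4) \<bullet> y = x $ 1 * y $ 1 + x $ 2 * y $ 2 + x $ 3 * y $ 3 + x $ 4 * y $ 4"
  by (simp add: inner_vec_def sum_4)

definition quat_vec :: "real quat \<Rightarrow> real^4" where
  "quat_vec q = (case q of (a, b, c, d) \<Rightarrow> vec4 a b c d)"

definition vec_quat :: "real^4 \<Rightarrow> real quat" where
  "vec_quat x = (x $ 1, x $ 2, x $ 3, x $ 4)"

lemma quat_vec_inverse [simp]: "quat_vec (vec_quat x) = x" "vec_quat (quat_vec q) = q"
  by (cases q rule: prod_cases4; simp add: quat_vec_def vec_quat_def vec4_eq_iff)+

lemma inner_quat_vec: "quat_vec p \<bullet> quat_vec q = qdot p q"
  by (cases p rule: prod_cases4; cases q rule: prod_cases4) (simp add: quat_vec_def inner_vec4)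

definition qmult :: "real^4 \<Rightarrow> real^4 \<Rightarrow> real^4" where
  "qmult x y = quat_vec (qmul (vec_quat x) (vec_quat y))"

definition qconj_vec :: "real^4 \<Rightarrow> real^4" where
  "qconj_vec x = quat_vec (qconj (vec_quat x))"

definition e1 :: "real^4" where "e1 = quat_vec (1, 0, 0, 0)"

lemma qmult_assoc: "qmult (qmult x y) z = qmult x (qmult y z)"
  by (simp add: qmult_def qmul_assoc)

lemma inner_qmult: "qmult u x \<bullet> qmult u y = (u \<bullet> u) * (x \<bullet> y)"
  by (metis inner_quat_vec qdot_qmul qmult_def quat_vec_inverse(1))

lemma qmult_e1: "qmult e1 x = x" "qmult x e1 = x"
  by (simp_all add: qmult_def e1_def qmul_unit)

lemma qmult_qconj_vec:
  assumes "u \<bullet> u = 1"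
  shows "qmult (qconj_vec u) u = e1" "qmult u (qconj_vec u) = e1"
proof -
  have "qdot (vec_quat u) (vec_quat u) = 1"
    using assms inner_quat_vec[of "vec_quat u" "vec_quat u"] by simp
  then show "qmult (qconj_vec u) u = e1" "qmult u (qconj_vec u) = e1"
    by (simp_all add: qmult_def qconj_vec_def e1_def qmul_qconj)
qed

lemma inner_qconj_vec: "qconj_vec u \<bullet> qconj_vec u = u \<bullet> u"
  by (simp add: qconj_vec_def vec_quat_def quat_vec_def inner_vec4)

lemma linear_qmult: "linear (qmult u)"
  by (intro linearI)
     (simp_all add: qmult_def vec_quat_def quat_vec_def vec4_eq_iff algebra_simps)

text \<open>Vertices are stored in doubled coordinates: \<open>vert\<close> halves them.\<close>

definition vert :: "zphi quat \<Rightarrow> real^4" where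
  "vert q = quat_vec (quat_map (\<lambda>z. real_of_zphi z / 2) q)"

lemma vert_eq:
  "vert (a, b, c, d) = vec4 (real_of_zphi a / 2) (real_of_zphi b / 2) (real_of_zphi c / 2) (real_of_zphi d / 2)"
  by (simp add: vert_def quat_vec_def)

lemma vert_qmul: "vert (qmul x y) = 2 *\<^sub>R qmult (vert x) (vert y)"
  by (cases x rule: prod_cases4; cases y rule: prod_cases4)
     (simp add: vert_def qmult_def quat_vec_def vec_quat_def vec4_eq_iff field_simps)

lemma vert_qscale: "vert (qscale c x) = real_of_zphi c *\<^sub>R vert x"
  by (cases x rule: prod_cases4) (simp add: vert_def quat_vec_def vec4_eq_iff)

lemma vert_add: "vert (x + y) = vert x + vert y"
  by (cases x rule: prod_cases4; cases y rule: prod_cases4)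
     (simp add: vert_def quat_vec_def vec4_eq_iff add_divide_distrib)

lemma vert_zero: "vert 0 = 0"
  by (simp add: vert_def quat_vec_def vec4_eq_iff zero_prod_def)

lemma vert_qconj: "vert (qconj x) = qconj_vec (vert x)"
  by (cases x rule: prod_cases4) (simp add: vert_def qconj_vec_def quat_vec_def vec_quat_def)

lemma inner_vert: "vert x \<bullet> vert y = real_of_zphi (qdot x y) / 4"
  by (cases x rule: prod_cases4; cases y rule: prod_cases4) (simp add: vert_def inner_quat_vec)

section \<open>The vertices of the 600-cell\<close>

definition axis_vertices :: "zphi quat list" where
  "axis_vertices = [(2,0,0,0), (0,2,0,0), (0,0,2,0), (0,0,0,2),
                    (-2,0,0,0), (0,-2,0,0), (0,0,-2,0), (0,0,0,-2)]"

definition half_vertices :: "zphi quat list" where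
  "half_vertices = [(a, b, c, d). a \<leftarrow> [1, -1], b \<leftarrow> [1, -1], c \<leftarrow> [1, -1], d \<leftarrow> [1, -1]]"

definition even_perm_list :: "nat list list" where
  "even_perm_list = [[0,1,2,3],[0,2,3,1],[0,3,1,2],[1,0,3,2],[1,2,0,3],[1,3,2,0],
                     [2,0,1,3],[2,1,3,0],[2,3,0,1],[3,0,2,1],[3,1,0,2],[3,2,1,0]]"

definition golden_base :: "zphi list" where "golden_base = [\<phi>, 1, \<phi> - 1, 0]"

text \<open>The sign of the zero coordinate is fixed to \<open>1\<close>, so that no vertex is listed twice.\<close>

definition golden_vertices :: "zphi quat list" where
  "golden_vertices =
     [(s0 * golden_base ! (p!0), s1 * golden_base ! (p!1), s2 * golden_base ! (p!2), s3 * golden_base ! (p!3)).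
        p \<leftarrow> even_perm_list, s0 \<leftarrow> [1, -1], s1 \<leftarrow> [1, -1], s2 \<leftarrow> [1, -1], s3 \<leftarrow> [1, -1],
        (p!0 = 3 \<longrightarrow> s0 = 1) \<and> (p!1 = 3 \<longrightarrow> s1 = 1) \<and> (p!2 = 3 \<longrightarrow> s2 = 1) \<and> (p!3 = 3 \<longrightarrow> s3 = 1)]"

definition vertex_list :: "zphi quat list" where
  "vertex_list = axis_vertices @ half_vertices @ golden_vertices"

lemma vert_axis_vertices:
  "vert ` set axis_vertices =
     {vec4 (s*a) (s*b) (s*c) (s*d) | s a b c d. s \<in> {1, -1} \<and>
         [a,b,c,d] \<in> {[1,0,0,0],[0,1,0,0],[0,0,1,0],[0,0,0,1]}}"
  by (auto simp: axis_vertices_def vert_def quat_vec_def intro: exI[of _ 1] exI[of _ "-1"])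

lemma real_of_zphi_sign: "s \<in> {1, -1} \<Longrightarrow> \<exists>\<sigma>\<in>{1, -1}. real_of_zphi \<sigma> = s"
  by (auto intro: bexI[of _ "-1"])

lemma set_half_vertices: "set half_vertices = {1, -1} \<times> {1, -1} \<times> {1, -1} \<times> {1, -1}"
  unfolding half_vertices_def by auto

lemma vert_half_vertices:
  "vert ` set half_vertices =
     {vec4 a b c d | a b c d. a \<in> {1/2, -1/2} \<and> b \<in> {1/2, -1/2} \<and> c \<in> {1/2, -1/2} \<and> d \<in> {1/2, -1/2}}"
    (is "_ = ?H")
proof (intro equalityI subsetI)
  have half: "real_of_zphi z / 2 \<in> {1/2, -1/2}" if "z \<in> {1, -1}" for z
    using that by auto
  fix x assume "x \<in> vert ` set half_vertices"
  then obtain a b c d where "(a, b, c, d) \<in> set half_vertices" "x = vert (a, b, c, d)"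
    by (metis imageE prod_cases4)
  then show "x \<in> ?H"
    unfolding set_half_vertices mem_Sigma_iff vert_eq using half by blast
next
  fix x assume "x \<in> ?H"
  then obtain a b c d where abcd: "2 * a \<in> {1, -1}" "2 * b \<in> {1, -1}" "2 * c \<in> {1, -1}" "2 * d \<in> {1, -1}"
    and x: "x = vec4 a b c d"
    by auto
  obtain \<alpha> \<beta> \<gamma> \<delta> where signs: "\<alpha> \<in> {1, -1}" "\<beta> \<in> {1, -1}" "\<gamma> \<in> {1, -1}" "\<delta> \<in> {1, -1}"
    and vals: "real_of_zphi \<alpha> = 2 * a" "real_of_zphi \<beta> = 2 * b" "real_of_zphi \<gamma> = 2 * c" "real_of_zphi \<delta> = 2 * d"
    using abcd real_of_zphi_sign by meson
  have "(\<alpha>, \<beta>, \<gamma>, \<delta>) \<in> set half_vertices"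
    unfolding set_half_vertices using signs by blast
  moreover have "x = vert (\<alpha>, \<beta>, \<gamma>, \<delta>)"
    unfolding vert_eq x vals by simp
  ultimately show "x \<in> vert ` set half_vertices" by blast
qed

lemma mem_golden_vertices:
  "x \<in> set golden_vertices \<longleftrightarrow>
     (\<exists>p\<in>set even_perm_list. \<exists>s0\<in>{1, -1}. \<exists>s1\<in>{1, -1}. \<exists>s2\<in>{1, -1}. \<exists>s3\<in>{1, -1}.
        ((p!0 = 3 \<longrightarrow> s0 = 1) \<and> (p!1 = 3 \<longrightarrow> s1 = 1) \<and> (p!2 = 3 \<longrightarrow> s2 = 1) \<and> (p!3 = 3 \<longrightarrow> s3 = 1)) \<and>
        x = (s0 * golden_base ! (p!0), s1 * golden_base ! (p!1), s2 * golden_base ! (p!2), s3 * golden_base ! (p!3)))"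
proof -
  have "x \<in> set (if G then [e] else []) \<longleftrightarrow> G \<and> x = e" for G e
    by auto
  then show ?thesis
    unfolding golden_vertices_def by (simp only: set_concat set_map image_image UN_iff list.set)
qed

definition golden_coords :: "real list" where
  "golden_coords = [golden/2, 1/2, 1/(2*golden), 0]"

lemma golden_base_coordinate:
  assumes "k < 4"
  shows "real_of_zphi (golden_base ! k) / 2 = golden_coords ! k"
proof -
  have "1 / (2 * golden) = (golden - 1) / 2"
    using golden_sq golden_bounds by (simp add: field_simps)
  moreover have "k = 0 \<or> k = 1 \<or> k = 2 \<or> k = 3" using assms by auto
  ultimately show ?thesis by (auto simp: golden_base_def golden_coords_def)
qed

lemma golden_base_signed_coordinate:
  assumes "s \<in> {1, -1}" "k < 4"
  obtains \<sigma> where "\<sigma> \<in> {1, -1}" "k = 3 \<longrightarrow> \<sigma> = 1"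
    "real_of_zphi (\<sigma> * golden_base ! k) / 2 = s * golden_coords ! k"
proof (cases "k = 3")
  case True
  then show ?thesis using that[of 1] by (simp add: golden_base_def golden_coords_def)
next
  case False
  obtain \<sigma> where "\<sigma> \<in> {1, -1}" "real_of_zphi \<sigma> = s" using real_of_zphi_sign assms(1) by blast
  then show ?thesis using that[of \<sigma>] False golden_base_coordinate[OF assms(2)] by (simp add: field_simps)
qed

lemma even_perm_list_entries: "p \<in> set even_perm_list \<Longrightarrow> p!0 < 4 \<and> p!1 < 4 \<and> p!2 < 4 \<and> p!3 < 4"
  by (auto simp: even_perm_list_def)

lemma set_even_perm_list: "set even_perm_list = even_perms4"
  by (simp add: even_perm_list_def even_perms4_def)

lemma vert_golden_vertex:
  assumes "y \<in> set golden_vertices"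
  obtains s0 s1 s2 s3 p where "s0 \<in> {1, -1}" "s1 \<in> {1, -1}" "s2 \<in> {1, -1}" "s3 \<in> {1, -1}"
    "p \<in> even_perms4"
    "vert y = vec4 (s0 * golden_coords ! (p!0)) (s1 * golden_coords ! (p!1))
                   (s2 * golden_coords ! (p!2)) (s3 * golden_coords ! (p!3))"
proof -
  obtain p \<sigma>0 \<sigma>1 \<sigma>2 \<sigma>3 where p: "p \<in> set even_perm_list"
    and \<sigma>: "\<sigma>0 \<in> {1, -1}" "\<sigma>1 \<in> {1, -1}" "\<sigma>2 \<in> {1, -1}" "\<sigma>3 \<in> {1, -1}"
    and y: "y = (\<sigma>0 * golden_base ! (p!0), \<sigma>1 * golden_base ! (p!1), \<sigma>2 * golden_base ! (p!2), \<sigma>3 * golden_base ! (p!3))"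
    using assms unfolding mem_golden_vertices by blast
  have "vert y = vec4 (real_of_zphi \<sigma>0 * golden_coords ! (p!0)) (real_of_zphi \<sigma>1 * golden_coords ! (p!1))
                      (real_of_zphi \<sigma>2 * golden_coords ! (p!2)) (real_of_zphi \<sigma>3 * golden_coords ! (p!3))"
    using even_perm_list_entries[OF p] golden_base_coordinate by (simp add: y vert_eq)
  moreover have "real_of_zphi \<sigma> \<in> {1, -1}" if "\<sigma> \<in> {1, -1}" for \<sigma>
    using that by auto
  ultimately show ?thesis using that \<sigma> p[unfolded set_even_perm_list] by blast
qed

lemma golden_vertex_exists:
  assumes s: "s0 \<in> {1, -1}" "s1 \<in> {1, -1}" "s2 \<in> {1, -1}" "s3 \<in> {1, -1}" and "p \<in> even_perms4"
  shows "vec4 (s0 * golden_coords ! (p!0)) (s1 * golden_coords ! (p!1))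
              (s2 * golden_coords ! (p!2)) (s3 * golden_coords ! (p!3)) \<in> vert ` set golden_vertices"
proof -
  have p: "p \<in> set even_perm_list" using assms(5) by (simp add: set_even_perm_list)
  note entries = even_perm_list_entries[OF p]
  obtain \<sigma>0 where \<sigma>0: "\<sigma>0 \<in> {1, -1}" "p!0 = 3 \<longrightarrow> \<sigma>0 = 1"
      "real_of_zphi (\<sigma>0 * golden_base ! (p!0)) / 2 = s0 * golden_coords ! (p!0)"
    using golden_base_signed_coordinate[OF s(1), of "p!0"] entries by blast
  obtain \<sigma>1 where \<sigma>1: "\<sigma>1 \<in> {1, -1}" "p!1 = 3 \<longrightarrow> \<sigma>1 = 1"
      "real_of_zphi (\<sigma>1 * golden_base ! (p!1)) / 2 = s1 * golden_coords ! (p!1)"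
    using golden_base_signed_coordinate[OF s(2), of "p!1"] entries by blast
  obtain \<sigma>2 where \<sigma>2: "\<sigma>2 \<in> {1, -1}" "p!2 = 3 \<longrightarrow> \<sigma>2 = 1"
      "real_of_zphi (\<sigma>2 * golden_base ! (p!2)) / 2 = s2 * golden_coords ! (p!2)"
    using golden_base_signed_coordinate[OF s(3), of "p!2"] entries by blast
  obtain \<sigma>3 where \<sigma>3: "\<sigma>3 \<in> {1, -1}" "p!3 = 3 \<longrightarrow> \<sigma>3 = 1"
      "real_of_zphi (\<sigma>3 * golden_base ! (p!3)) / 2 = s3 * golden_coords ! (p!3)"
    using golden_base_signed_coordinate[OF s(4), of "p!3"] entries by blast
  let ?y = "(\<sigma>0 * golden_base ! (p!0), \<sigma>1 * golden_base ! (p!1), \<sigma>2 * golden_base ! (p!2), \<sigma>3 * golden_base ! (p!3))"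
  have "?y \<in> set golden_vertices"
    unfolding mem_golden_vertices using p \<sigma>0 \<sigma>1 \<sigma>2 \<sigma>3 by blast
  moreover have "vert ?y = vec4 (s0 * golden_coords ! (p!0)) (s1 * golden_coords ! (p!1))
                                (s2 * golden_coords ! (p!2)) (s3 * golden_coords ! (p!3))"
    unfolding vert_eq \<sigma>0(3) \<sigma>1(3) \<sigma>2(3) \<sigma>3(3) ..
  ultimately show ?thesis by (metis imageI)
qed

lemma vert_golden_vertices:
  "vert ` set golden_vertices =
     {vec4 (s0 * base ! (p!0)) (s1 * base ! (p!1)) (s2 * base ! (p!2)) (s3 * base ! (p!3))
       | s0 s1 s2 s3 p base. s0 \<in> {1,-1} \<and> s1 \<in> {1,-1} \<and> s2 \<in> {1,-1} \<and> s3 \<in> {1,-1} \<and>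
         p \<in> even_perms4 \<and> base = [golden/2, 1/2, 1/(2*golden), 0]}"
  unfolding golden_coords_def[symmetric]
proof (intro equalityI subsetI)
  fix x assume "x \<in> vert ` set golden_vertices"
  then obtain y where "y \<in> set golden_vertices" "x = vert y" by blast
  then show "x \<in> {vec4 (s0 * base ! (p!0)) (s1 * base ! (p!1)) (s2 * base ! (p!2)) (s3 * base ! (p!3))
       | s0 s1 s2 s3 p base. s0 \<in> {1,-1} \<and> s1 \<in> {1,-1} \<and> s2 \<in> {1,-1} \<and> s3 \<in> {1,-1} \<and>
         p \<in> even_perms4 \<and> base = golden_coords}"
    by (elim vert_golden_vertex) blast
qed (use golden_vertex_exists in blast)

lemma V600_vertex_list: "V600 = vert ` set vertex_list"
  unfolding V600_def vertex_list_def image_Un set_append Un_assoc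
  by (simp only: vert_axis_vertices vert_half_vertices vert_golden_vertices)

lemma V600_obtain_vert:
  assumes "x \<in> V600"
  obtains x' where "x' \<in> set vertex_list" "x = vert x'"
  using assms unfolding V600_vertex_list by blast

lemma finite_V600: "finite V600"
  by (simp add: V600_vertex_list)

lemma axis_vertex_in_V600: "x \<in> set axis_vertices \<Longrightarrow> vert x \<in> V600"
  by (simp add: V600_vertex_list vertex_list_def)

fun zphi_half :: "zphi \<Rightarrow> zphi" where
  "zphi_half (ZPhi a b) = ZPhi (a div 2) (b div 2)"

definition quat_half :: "zphi quat \<Rightarrow> zphi quat" where
  "quat_half = quat_map zphi_half"

definition halves_into :: "zphi quat list \<Rightarrow> zphi quat \<Rightarrow> bool" where
  "halves_into V p \<longleftrightarrow> qscale 2 (quat_half p) = p \<and> quat_half p \<in> set V"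

definition left_closed :: "zphi quat list \<Rightarrow> zphi quat \<Rightarrow> bool" where
  "left_closed V g \<longleftrightarrow> (\<forall>x\<in>set V. halves_into V (qmul g x))"

definition vertex_one :: "zphi quat" where "vertex_one = (2, 0, 0, 0)"
definition gen_s :: "zphi quat" where "gen_s = (1, 1, 1, 1)"
definition gen_t :: "zphi quat" where "gen_t = (\<phi>, 1, \<phi> - 1, 0)"

definition fresh_products :: "zphi quat list \<Rightarrow> zphi quat list \<Rightarrow> zphi quat list" where
  "fresh_products seen new =
     remdups [y \<leftarrow> [quat_half (qmul g x). g \<leftarrow> [gen_s, gen_t], x \<leftarrow> new]. y \<notin> set seen]"

fun orbit :: "nat \<Rightarrow> zphi quat list \<Rightarrow> zphi quat list \<Rightarrow> zphi quat list" where
  "orbit 0 seen new = new @ seen"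
| "orbit (Suc n) seen new = orbit n (new @ seen) (fresh_products (new @ seen) new)"

lemma left_closed_generators: "left_closed vertex_list gen_s" "left_closed vertex_list gen_t"
  by code_simp+

lemma vertex_list_subset_orbit: "set vertex_list \<subseteq> set (orbit 12 [] [vertex_one])"
  by code_simp

lemma vertex_list_unit_conj: "\<forall>x\<in>set vertex_list. qdot x x = 4 \<and> qconj x \<in> set vertex_list"
  by code_simp

lemma vertex_list_fst:
  "\<forall>x\<in>set vertex_list. x = vertex_one \<or> fst x \<in> {\<phi>, 1, \<phi> - 1, 0, 1 - \<phi>, -1, - \<phi>, -2}"
  by code_simp

section \<open>The vertices form a group of unit quaternions\<close>

definition left_stable :: "(real^4) set" where
  "left_stable = {u. \<forall>x\<in>V600. qmult u x \<in> V600}"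

lemma left_stable_qmult: "u \<in> left_stable \<Longrightarrow> v \<in> left_stable \<Longrightarrow> qmult u v \<in> left_stable"
  by (simp add: left_stable_def qmult_assoc)

lemma vert_quat_half: "halves_into V p \<Longrightarrow> 2 *\<^sub>R vert (quat_half p) = vert p"
  unfolding halves_into_def by (metis real_of_zphi_numeral vert_qscale)

lemma left_closed_vert:
  assumes "left_closed vertex_list g" "x \<in> set vertex_list"
  shows "quat_half (qmul g x) \<in> set vertex_list" "vert (quat_half (qmul g x)) = qmult (vert g) (vert x)"
proof -
  have h: "halves_into vertex_list (qmul g x)" using assms unfolding left_closed_def by blast
  then show "quat_half (qmul g x) \<in> set vertex_list" unfolding halves_into_def by blast
  have "2 *\<^sub>R vert (quat_half (qmul g x)) = 2 *\<^sub>R qmult (vert g) (vert x)"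
    unfolding vert_quat_half[OF h] vert_qmul ..
  then show "vert (quat_half (qmul g x)) = qmult (vert g) (vert x)" by simp
qed

lemma generator_left_stable:
  assumes "left_closed vertex_list g"
  shows "vert g \<in> left_stable"
proof (unfold left_stable_def, intro CollectI ballI)
  fix z assume "z \<in> V600"
  then obtain x where x: "x \<in> set vertex_list" "z = vert x" unfolding V600_vertex_list by blast
  then have "qmult (vert g) z = vert (quat_half (qmul g x))" using left_closed_vert[OF assms] by simp
  moreover have "quat_half (qmul g x) \<in> set vertex_list" using left_closed_vert[OF assms x(1)] by blast
  ultimately show "qmult (vert g) z \<in> V600" unfolding V600_vertex_list by blast
qed

lemma orbit_left_stable:
  assumes "set seen \<union> set new \<subseteq> {x \<in> set vertex_list. vert x \<in> left_stable}"
  shows "set (orbit n seen new) \<subseteq> {x \<in> set vertex_list. vert x \<in> left_stable}"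
  using assms
proof (induction n arbitrary: seen new)
  case 0
  then show ?case by auto
next
  case (Suc n)
  have "set (fresh_products (new @ seen) new) \<subseteq> {x \<in> set vertex_list. vert x \<in> left_stable}"
  proof
    fix y assume "y \<in> set (fresh_products (new @ seen) new)"
    then obtain g x where g: "g \<in> {gen_s, gen_t}" and x: "x \<in> set new" and y: "y = quat_half (qmul g x)"
      unfolding fresh_products_def by (simp del: qmul.simps) blast
    have "left_closed vertex_list g" using g left_closed_generators by blast
    moreover have "x \<in> set vertex_list" "vert x \<in> left_stable" using x Suc.prems by auto
    ultimately show "y \<in> {x \<in> set vertex_list. vert x \<in> left_stable}"
      using y left_closed_vert generator_left_stable left_stable_qmult by auto
  qed
  then show ?case using Suc by simp
qed

lemma e1_vert: "e1 = vert vertex_one"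
  by (simp add: e1_def vertex_one_def vert_eq quat_vec_def)

lemma V600_qmult:
  assumes "u \<in> V600" "x \<in> V600"
  shows "qmult u x \<in> V600"
proof -
  have "vert vertex_one \<in> left_stable" by (simp add: left_stable_def qmult_e1 flip: e1_vert)
  moreover have "vertex_one \<in> set vertex_list"
    unfolding vertex_list_def by (simp add: axis_vertices_def vertex_one_def)
  ultimately have "set (orbit 12 [] [vertex_one]) \<subseteq> {x \<in> set vertex_list. vert x \<in> left_stable}"
    by (intro orbit_left_stable) auto
  then have "V600 \<subseteq> left_stable"
    using vertex_list_subset_orbit unfolding V600_vertex_list by auto
  then show ?thesis using assms by (auto simp: left_stable_def)
qed

lemma V600_unit: "x \<in> V600 \<Longrightarrow> x \<bullet> x = 1"
  using vertex_list_unit_conj by (auto simp: V600_vertex_list inner_vert)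

lemma V600_qconj_vec: "x \<in> V600 \<Longrightarrow> qconj_vec x \<in> V600"
  using vertex_list_unit_conj by (auto simp: V600_vertex_list simp flip: vert_qconj)

lemma e1_in_V600: "e1 \<in> V600"
  unfolding e1_vert by (rule axis_vertex_in_V600) (simp add: axis_vertices_def vertex_one_def)

lemma V600_uminus:
  assumes "x \<in> V600"
  shows "- x \<in> V600"
proof -
  have "vert (-2, 0, 0, 0) \<in> V600"
    by (rule axis_vertex_in_V600) (simp add: axis_vertices_def)
  moreover have "qmult (vert (-2, 0, 0, 0)) x = - x"
    by (simp add: vert_eq qmult_def quat_vec_def vec_quat_def vec4_eq_iff)
  ultimately show ?thesis using V600_qmult[OF _ assms] by metis
qed

lemma qconj_vec_qmult_V600:
  assumes "u \<in> V600"
  shows "qmult (qconj_vec u) u = e1"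
    and "x \<in> V600 \<Longrightarrow> qmult (qconj_vec u) x \<in> V600"
    and "qmult (qconj_vec u) x \<bullet> qmult (qconj_vec u) y = x \<bullet> y"
    and "qmult u (qmult (qconj_vec u) x) = x"
  using assms V600_unit[OF assms] V600_qmult V600_qconj_vec
  by (simp_all add: qmult_qconj_vec inner_qmult inner_qconj_vec qmult_e1 flip: qmult_assoc)

text \<open>Two vertices span an edge of the 600-cell iff they subtend the angle \<open>\<pi>/5\<close>, whose cosine is \<open>golden / 2\<close>.\<close>

definition adj600 :: "real^4 \<Rightarrow> real^4 \<Rightarrow> bool" where
  "adj600 x y \<longleftrightarrow> x \<bullet> y = golden / 2"

lemma symp_adj600: "symp adj600"
  by (simp add: symp_def adj600_def inner_commute)

lemma adj600_vert: "adj600 (vert x) (vert y) \<longleftrightarrow> qdot x y = 2 * \<phi>"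
proof -
  have "adj600 (vert x) (vert y) \<longleftrightarrow> real_of_zphi (qdot x y) = real_of_zphi (2 * \<phi>)"
    by (auto simp: adj600_def inner_vert)
  then show ?thesis by (simp only: real_of_zphi_inject)
qed

section \<open>Local structure at \<open>e1\<close>, by computation\<close>

definition neighbours :: "zphi quat list \<Rightarrow> zphi quat \<Rightarrow> zphi quat list" where
  "neighbours V x = [y \<leftarrow> V. qdot x y = 2 * \<phi>]"

definition chords_at_one :: "zphi quat list \<Rightarrow> zphi quat list \<Rightarrow> bool" where
  "chords_at_one V N \<longleftrightarrow>
     (\<forall>b\<in>set N. \<forall>c\<in>set (neighbours V b). c = vertex_one \<or> c \<in> set N \<or>
        (\<forall>d\<in>set N. qdot c d = 2 * \<phi> \<longrightarrow> d = b \<or> qdot b d = 2 * \<phi>))"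

lemma chords_at_one_vertex_list: "chords_at_one vertex_list (neighbours vertex_list vertex_one)"
  by code_simp

text \<open>A certificate \<open>[(c\<^sub>1, h\<^sub>1), \<dots>]\<close> writes \<open>1 + x\<close> as the combination \<open>\<Sum> c\<^sub>i h\<^sub>i\<close> of vertices with
  coefficients in \<open>{1, \<phi>, \<phi> - 1}\<close> summing to less than \<open>2\<close>.\<close>

definition cert_sum :: "(zphi \<times> zphi quat) list \<Rightarrow> zphi quat" where
  "cert_sum l = (\<Sum>(c, h)\<leftarrow>l. qscale c h)"

definition cert_valid :: "zphi quat list \<Rightarrow> (zphi \<times> zphi quat) list \<Rightarrow> bool" where
  "cert_valid V l \<longleftrightarrow>
     (\<forall>(c, h)\<in>set l. c \<in> {1, \<phi>, \<phi> - 1} \<and> h \<in> set V) \<and>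
     (\<Sum>(c, h)\<leftarrow>l. c) \<in> {0, 1, \<phi>, \<phi> - 1, 2 * \<phi> - 2, 3 * \<phi> - 3}"

definition certificates :: "(zphi \<times> zphi quat) list list" where
  "certificates =
    [[(1, (\<phi>, 1, \<phi> - 1, 0)), (\<phi> - 1, (\<phi> - 1, \<phi>, -1, 0))],
     [(1, (\<phi>, 0, 1, \<phi> - 1)), (\<phi> - 1, (\<phi> - 1, 0, \<phi>, -1))],
     [(1, (\<phi>, \<phi> - 1, 0, 1)), (\<phi> - 1, (\<phi> - 1, -1, 0, \<phi>))],
     [],
     [(1, (\<phi>, -1, \<phi> - 1, 0)), (\<phi> - 1, (\<phi> - 1, - \<phi>, -1, 0))],
     [(1, (\<phi>, 0, -1, \<phi> - 1)), (\<phi> - 1, (\<phi> - 1, 0, - \<phi>, -1))],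
     [(1, (\<phi>, \<phi> - 1, 0, -1)), (\<phi> - 1, (\<phi> - 1, -1, 0, - \<phi>))],
     [(\<phi> - 1, (\<phi>, 1, \<phi> - 1, 0)), (\<phi> - 1, (\<phi>, \<phi> - 1, 0, 1)), (\<phi> - 1, (\<phi>, 0, 1, \<phi> - 1))],
     [(\<phi> - 1, (\<phi>, 1, \<phi> - 1, 0)), (\<phi> - 1, (\<phi>, \<phi> - 1, 0, -1)), (\<phi> - 1, (\<phi>, 0, 1, 1 - \<phi>))],
     [(\<phi> - 1, (\<phi>, \<phi> - 1, 0, 1)), (\<phi> - 1, (\<phi>, 1, 1 - \<phi>, 0)), (\<phi> - 1, (\<phi>, 0, -1, \<phi> - 1))],
     [(\<phi> - 1, (\<phi>, \<phi> - 1, 0, -1)), (\<phi> - 1, (\<phi>, 1, 1 - \<phi>, 0)), (\<phi> - 1, (\<phi>, 0, -1, 1 - \<phi>))],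
     [(\<phi> - 1, (\<phi>, 0, 1, \<phi> - 1)), (\<phi> - 1, (\<phi>, -1, \<phi> - 1, 0)), (\<phi> - 1, (\<phi>, 1 - \<phi>, 0, 1))],
     [(\<phi> - 1, (\<phi>, 0, 1, 1 - \<phi>)), (\<phi> - 1, (\<phi>, -1, \<phi> - 1, 0)), (\<phi> - 1, (\<phi>, 1 - \<phi>, 0, -1))],
     [(\<phi> - 1, (\<phi>, 0, -1, \<phi> - 1)), (\<phi> - 1, (\<phi>, 1 - \<phi>, 0, 1)), (\<phi> - 1, (\<phi>, -1, 1 - \<phi>, 0))],
     [(\<phi> - 1, (\<phi>, 0, -1, 1 - \<phi>)), (\<phi> - 1, (\<phi>, 1 - \<phi>, 0, -1)), (\<phi> - 1, (\<phi>, -1, 1 - \<phi>, 0))],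
     [(1, (1, 1, 1, 1))],
     [(1, (1, 1, 1, -1))],
     [(1, (1, 1, -1, 1))],
     [(1, (1, 1, -1, -1))],
     [(1, (1, -1, 1, 1))],
     [(1, (1, -1, 1, -1))],
     [(1, (1, -1, -1, 1))],
     [(1, (1, -1, -1, -1))],
     [(\<phi> - 1, (\<phi> - 1, \<phi>, 1, 0))],
     [(\<phi> - 1, (\<phi> - 1, \<phi>, -1, 0))],
     [(\<phi> - 1, (\<phi> - 1, - \<phi>, 1, 0))],
     [(\<phi> - 1, (\<phi> - 1, - \<phi>, -1, 0))],
     [(\<phi> - 1, (\<phi> - 1, 1, 0, \<phi>))],
     [(\<phi> - 1, (\<phi> - 1, 1, 0, - \<phi>))],
     [(\<phi> - 1, (\<phi> - 1, -1, 0, \<phi>))],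
     [(\<phi> - 1, (\<phi> - 1, -1, 0, - \<phi>))],
     [(\<phi> - 1, (\<phi> - 1, 0, \<phi>, 1))],
     [(\<phi> - 1, (\<phi> - 1, 0, \<phi>, -1))],
     [(\<phi> - 1, (\<phi> - 1, 0, - \<phi>, 1))],
     [(\<phi> - 1, (\<phi> - 1, 0, - \<phi>, -1))],
     [(\<phi> - 1, (\<phi>, 1, \<phi> - 1, 0)), (\<phi> - 1, (\<phi>, \<phi> - 1, 0, 1)), (\<phi> - 1, (\<phi>, 1, 1 - \<phi>, 0))],
     [(\<phi> - 1, (\<phi>, 1, \<phi> - 1, 0)), (\<phi> - 1, (\<phi>, \<phi> - 1, 0, -1)), (\<phi> - 1, (\<phi>, 1, 1 - \<phi>, 0))],
     [(\<phi> - 1, (\<phi>, -1, \<phi> - 1, 0)), (\<phi> - 1, (\<phi>, 1 - \<phi>, 0, 1)), (\<phi> - 1, (\<phi>, -1, 1 - \<phi>, 0))],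
     [(\<phi> - 1, (\<phi>, -1, \<phi> - 1, 0)), (\<phi> - 1, (\<phi>, 1 - \<phi>, 0, -1)), (\<phi> - 1, (\<phi>, -1, 1 - \<phi>, 0))],
     [(1, (1, \<phi>, 0, \<phi> - 1))],
     [(1, (1, \<phi>, 0, 1 - \<phi>))],
     [(1, (1, - \<phi>, 0, \<phi> - 1))],
     [(1, (1, - \<phi>, 0, 1 - \<phi>))],
     [(\<phi> - 1, (\<phi>, 1, \<phi> - 1, 0)), (\<phi> - 1, (\<phi>, 0, 1, \<phi> - 1)), (\<phi> - 1, (\<phi>, 0, 1, 1 - \<phi>))],
     [(\<phi> - 1, (\<phi>, 1, 1 - \<phi>, 0)), (\<phi> - 1, (\<phi>, 0, -1, \<phi> - 1)), (\<phi> - 1, (\<phi>, 0, -1, 1 - \<phi>))],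
     [(\<phi> - 1, (\<phi>, 0, 1, \<phi> - 1)), (\<phi> - 1, (\<phi>, 0, 1, 1 - \<phi>)), (\<phi> - 1, (\<phi>, -1, \<phi> - 1, 0))],
     [(\<phi> - 1, (\<phi>, 0, -1, \<phi> - 1)), (\<phi> - 1, (\<phi>, 0, -1, 1 - \<phi>)), (\<phi> - 1, (\<phi>, -1, 1 - \<phi>, 0))],
     [(1, (1, \<phi> - 1, \<phi>, 0))],
     [(1, (1, \<phi> - 1, - \<phi>, 0))],
     [(1, (1, 1 - \<phi>, \<phi>, 0))],
     [(1, (1, 1 - \<phi>, - \<phi>, 0))],
     [(\<phi> - 1, (\<phi>, \<phi> - 1, 0, 1)), (\<phi> - 1, (\<phi>, 0, 1, \<phi> - 1)), (\<phi> - 1, (\<phi>, 1 - \<phi>, 0, 1))],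
     [(\<phi> - 1, (\<phi>, \<phi> - 1, 0, -1)), (\<phi> - 1, (\<phi>, 0, 1, 1 - \<phi>)), (\<phi> - 1, (\<phi>, 1 - \<phi>, 0, -1))],
     [(\<phi> - 1, (\<phi>, \<phi> - 1, 0, 1)), (\<phi> - 1, (\<phi>, 0, -1, \<phi> - 1)), (\<phi> - 1, (\<phi>, 1 - \<phi>, 0, 1))],
     [(\<phi> - 1, (\<phi>, \<phi> - 1, 0, -1)), (\<phi> - 1, (\<phi>, 0, -1, 1 - \<phi>)), (\<phi> - 1, (\<phi>, 1 - \<phi>, 0, -1))],
     [(1, (1, 0, \<phi> - 1, \<phi>))],
     [(1, (1, 0, \<phi> - 1, - \<phi>))],
     [(1, (1, 0, 1 - \<phi>, \<phi>))],
     [(1, (1, 0, 1 - \<phi>, - \<phi>))],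
     [(\<phi>, (\<phi>, 1, \<phi> - 1, 0))],
     [(\<phi>, (\<phi>, 1, 1 - \<phi>, 0))],
     [(\<phi>, (\<phi>, -1, \<phi> - 1, 0))],
     [(\<phi>, (\<phi>, -1, 1 - \<phi>, 0))],
     [(\<phi> - 1, (\<phi>, 1, \<phi> - 1, 0)), (\<phi> - 1, (\<phi> - 1, \<phi>, 1, 0))],
     [(\<phi> - 1, (\<phi>, 1, 1 - \<phi>, 0)), (\<phi> - 1, (\<phi> - 1, \<phi>, -1, 0))],
     [(\<phi> - 1, (\<phi>, -1, \<phi> - 1, 0)), (\<phi> - 1, (\<phi> - 1, - \<phi>, 1, 0))],
     [(\<phi> - 1, (\<phi>, -1, 1 - \<phi>, 0)), (\<phi> - 1, (\<phi> - 1, - \<phi>, -1, 0))],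
     [(\<phi>, (\<phi>, \<phi> - 1, 0, 1))],
     [(\<phi>, (\<phi>, \<phi> - 1, 0, -1))],
     [(\<phi>, (\<phi>, 1 - \<phi>, 0, 1))],
     [(\<phi>, (\<phi>, 1 - \<phi>, 0, -1))],
     [(\<phi> - 1, (\<phi>, \<phi> - 1, 0, 1)), (\<phi> - 1, (\<phi> - 1, 1, 0, \<phi>))],
     [(\<phi> - 1, (\<phi>, \<phi> - 1, 0, -1)), (\<phi> - 1, (\<phi> - 1, 1, 0, - \<phi>))],
     [(\<phi> - 1, (\<phi>, 1 - \<phi>, 0, 1)), (\<phi> - 1, (\<phi> - 1, -1, 0, \<phi>))],
     [(\<phi> - 1, (\<phi>, 1 - \<phi>, 0, -1)), (\<phi> - 1, (\<phi> - 1, -1, 0, - \<phi>))],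
     [(\<phi>, (\<phi>, 0, 1, \<phi> - 1))],
     [(\<phi>, (\<phi>, 0, 1, 1 - \<phi>))],
     [(\<phi>, (\<phi>, 0, -1, \<phi> - 1))],
     [(\<phi>, (\<phi>, 0, -1, 1 - \<phi>))],
     [(\<phi> - 1, (\<phi>, 0, 1, \<phi> - 1)), (\<phi> - 1, (\<phi> - 1, 0, \<phi>, 1))],
     [(\<phi> - 1, (\<phi>, 0, 1, 1 - \<phi>)), (\<phi> - 1, (\<phi> - 1, 0, \<phi>, -1))],
     [(\<phi> - 1, (\<phi>, 0, -1, \<phi> - 1)), (\<phi> - 1, (\<phi> - 1, 0, - \<phi>, 1))],
     [(\<phi> - 1, (\<phi>, 0, -1, 1 - \<phi>)), (\<phi> - 1, (\<phi> - 1, 0, - \<phi>, -1))],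
     [(1, (1, 1, 1, 1)), (\<phi> - 1, (\<phi>, 1, 1 - \<phi>, 0))],
     [(1, (1, 1, 1, -1)), (\<phi> - 1, (\<phi>, 1, 1 - \<phi>, 0))],
     [(1, (1, 1, -1, 1)), (\<phi> - 1, (\<phi>, 1, \<phi> - 1, 0))],
     [(1, (1, 1, -1, -1)), (\<phi> - 1, (\<phi>, 1, \<phi> - 1, 0))],
     [(1, (1, -1, 1, 1)), (\<phi> - 1, (\<phi>, -1, 1 - \<phi>, 0))],
     [(1, (1, -1, 1, -1)), (\<phi> - 1, (\<phi>, -1, 1 - \<phi>, 0))],
     [(1, (1, -1, -1, 1)), (\<phi> - 1, (\<phi>, -1, \<phi> - 1, 0))],
     [(1, (1, -1, -1, -1)), (\<phi> - 1, (\<phi>, -1, \<phi> - 1, 0))],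
     [(1, (1, 1, 1, 1)), (\<phi> - 1, (\<phi>, 0, 1, 1 - \<phi>))],
     [(1, (1, 1, 1, -1)), (\<phi> - 1, (\<phi>, 0, 1, \<phi> - 1))],
     [(1, (1, 1, -1, 1)), (\<phi> - 1, (\<phi>, 0, -1, 1 - \<phi>))],
     [(1, (1, 1, -1, -1)), (\<phi> - 1, (\<phi>, 0, -1, \<phi> - 1))],
     [(1, (1, -1, 1, 1)), (\<phi> - 1, (\<phi>, 0, 1, 1 - \<phi>))],
     [(1, (1, -1, 1, -1)), (\<phi> - 1, (\<phi>, 0, 1, \<phi> - 1))],
     [(1, (1, -1, -1, 1)), (\<phi> - 1, (\<phi>, 0, -1, 1 - \<phi>))],
     [(1, (1, -1, -1, -1)), (\<phi> - 1, (\<phi>, 0, -1, \<phi> - 1))],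
     [(1, (1, 1, 1, 1)), (\<phi> - 1, (\<phi>, 1 - \<phi>, 0, 1))],
     [(1, (1, 1, 1, -1)), (\<phi> - 1, (\<phi>, 1 - \<phi>, 0, -1))],
     [(1, (1, 1, -1, 1)), (\<phi> - 1, (\<phi>, 1 - \<phi>, 0, 1))],
     [(1, (1, 1, -1, -1)), (\<phi> - 1, (\<phi>, 1 - \<phi>, 0, -1))],
     [(1, (1, -1, 1, 1)), (\<phi> - 1, (\<phi>, \<phi> - 1, 0, 1))],
     [(1, (1, -1, 1, -1)), (\<phi> - 1, (\<phi>, \<phi> - 1, 0, -1))],
     [(1, (1, -1, -1, 1)), (\<phi> - 1, (\<phi>, \<phi> - 1, 0, 1))],
     [(1, (1, -1, -1, -1)), (\<phi> - 1, (\<phi>, \<phi> - 1, 0, -1))]]"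

lemma certificates_valid: "\<forall>l\<in>set certificates. cert_valid vertex_list l"
  by code_simp

lemma certificates_cover:
  "map cert_sum certificates =
     [vertex_one + x. x \<leftarrow> vertex_list, x \<noteq> vertex_one \<and> qdot vertex_one x \<noteq> 2 * \<phi>]"
  by code_simp

lemma vert_cert_sum:
  "vert (cert_sum l) = (\<Sum>(c, h)\<leftarrow>map (\<lambda>(c, h). (real_of_zphi c, vert h)) l. c *\<^sub>R h)"
  "real_of_zphi (\<Sum>(c, h)\<leftarrow>l. c) = (\<Sum>(c, h)\<leftarrow>map (\<lambda>(c, h). (real_of_zphi c, vert h)) l. c)"
  by (induction l) (auto simp: cert_sum_def vert_add vert_zero vert_qscale simp del: qscale.simps)

lemma e1_inner_vert: "e1 \<bullet> vert x = real_of_zphi (fst x) / 2"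
  by (cases x rule: prod_cases4) (simp add: e1_vert vertex_one_def inner_vert)

lemma e1_inner_le:
  assumes "x \<in> V600" "x \<noteq> e1"
  shows "e1 \<bullet> x \<le> golden / 2"
proof -
  obtain x' where x': "x' \<in> set vertex_list" "x = vert x'" using assms(1) by (rule V600_obtain_vert)
  then have "x' \<noteq> vertex_one" using assms(2) e1_vert by auto
  then have "fst x' \<in> {\<phi>, 1, \<phi> - 1, 0, 1 - \<phi>, -1, - \<phi>, -2}" using vertex_list_fst x'(1) by blast
  then have "real_of_zphi (fst x') \<le> golden" using golden_bounds by auto
  then show ?thesis by (simp add: x'(2) e1_inner_vert)
qed

lemma e1_midpoint_shrunk:
  assumes "x \<in> V600" "x \<noteq> e1" "\<not> adj600 e1 x"
  obtains t y where "0 \<le> t" "t < 2" "y \<in> convex hull V600" "e1 + x = t *\<^sub>R y"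
proof -
  obtain x' where x': "x' \<in> set vertex_list" "x = vert x'" using assms(1) by (rule V600_obtain_vert)
  have "x' \<noteq> vertex_one" using assms(2) x' e1_vert by auto
  moreover have "qdot vertex_one x' \<noteq> 2 * \<phi>"
    using assms(3) unfolding x'(2) e1_vert adj600_vert .
  ultimately have "vertex_one + x' \<in> set (map cert_sum certificates)"
    unfolding certificates_cover using x'(1) by auto
  then obtain l where l: "l \<in> set certificates" "cert_sum l = vertex_one + x'" by auto
  let ?rl = "map (\<lambda>(c, h). (real_of_zphi c, vert h)) l"
  have valid: "cert_valid vertex_list l" using l(1) certificates_valid by blast
  have "\<forall>(c, h)\<in>set ?rl. 0 \<le> c \<and> h \<in> V600"
    using valid golden_bounds by (auto simp: cert_valid_def V600_vertex_list)
  then obtain y where y: "y \<in> convex hull V600" "(\<Sum>(c, h)\<leftarrow>?rl. c *\<^sub>R h) = (\<Sum>(c, h)\<leftarrow>?rl. c) *\<^sub>R y"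
    using conic_combination_in_scaled_hull e1_in_V600 by blast
  define t where "t = (\<Sum>(c, h)\<leftarrow>?rl. c)"
  have "t = real_of_zphi (\<Sum>(c, h)\<leftarrow>l. c)"
    unfolding t_def by (rule vert_cert_sum(2)[symmetric])
  also have "\<dots> \<in> {0, 1, golden, golden - 1, 2 * golden - 2, 3 * golden - 3}"
    using valid unfolding cert_valid_def by auto
  finally have "0 \<le> t" "t < 2" using golden_bounds by auto
  moreover have "e1 + x = vert (cert_sum l)"
    by (simp add: l(2) x'(2) e1_vert vert_add)
  then have "e1 + x = t *\<^sub>R y"
    by (simp only: vert_cert_sum(1) y(2) t_def)
  ultimately show ?thesis using that y(1) by blast
qed

lemma e1_square_chord:
  assumes "b \<in> V600" "c \<in> V600" "d \<in> V600" "adj600 e1 b" "adj600 e1 d" "adj600 b c" "adj600 c d"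
    and "b \<noteq> d" "\<not> adj600 b d" "c \<noteq> e1"
  shows "adj600 e1 c"
proof -
  obtain b' where b': "b' \<in> set vertex_list" "b = vert b'" using assms(1) by (rule V600_obtain_vert)
  obtain c' where c': "c' \<in> set vertex_list" "c = vert c'" using assms(2) by (rule V600_obtain_vert)
  obtain d' where d': "d' \<in> set vertex_list" "d = vert d'" using assms(3) by (rule V600_obtain_vert)
  have N: "b' \<in> set (neighbours vertex_list vertex_one)" "d' \<in> set (neighbours vertex_list vertex_one)"
    using assms(4,5) b' d' by (auto simp: neighbours_def e1_vert adj600_vert)
  have "c' \<in> set (neighbours vertex_list b')"
    using assms(6) b' c' by (auto simp: neighbours_def adj600_vert)
  moreover have "c' \<noteq> vertex_one" using assms(10) c'(2) e1_vert by auto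
  moreover have "d' \<noteq> b'" "qdot b' d' \<noteq> 2 * \<phi>" "qdot c' d' = 2 * \<phi>"
    using assms(7,8,9) b' c' d' adj600_vert by auto
  ultimately have "c' \<in> set (neighbours vertex_list vertex_one)"
    using chords_at_one_vertex_list N unfolding chords_at_one_def by blast
  then show ?thesis by (simp add: neighbours_def e1_vert c'(2) adj600_vert)
qed

section \<open>Global structure of the vertex set\<close>

lemma V600_inner_le:
  assumes "x \<in> V600" "y \<in> V600" "x \<noteq> y"
  shows "x \<bullet> y \<le> golden / 2"
proof -
  let ?T = "qmult (qconj_vec x)"
  have "?T y \<noteq> e1" using qconj_vec_qmult_V600(1,4)[OF assms(1)] assms(3) by metis
  then have "e1 \<bullet> ?T y \<le> golden / 2"
    using e1_inner_le qconj_vec_qmult_V600(2)[OF assms(1,2)] by blast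
  then show ?thesis using qconj_vec_qmult_V600(1,3)[OF assms(1)] by metis
qed

lemma V600_midpoint_shrunk:
  assumes "u \<in> V600" "w \<in> V600" "u \<noteq> w" "\<not> adj600 u w"
  obtains t y where "0 \<le> t" "t < 2" "y \<in> convex hull V600" "u + w = t *\<^sub>R y"
proof -
  let ?T = "qmult (qconj_vec u)"
  have "?T w \<noteq> e1" using qconj_vec_qmult_V600(1,4)[OF assms(1)] assms(3) by metis
  moreover have "\<not> adj600 e1 (?T w)"
    using assms(4) qconj_vec_qmult_V600(1,3)[OF assms(1)] unfolding adj600_def by metis
  ultimately obtain t y where ty: "0 \<le> t" "t < 2" "y \<in> convex hull V600" "e1 + ?T w = t *\<^sub>R y"
    using e1_midpoint_shrunk qconj_vec_qmult_V600(2)[OF assms(1,2)] by blast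
  have "u + w = qmult u (e1 + ?T w)"
    using linear_qmult[of u] qconj_vec_qmult_V600(4)[OF assms(1)] by (simp add: linear_add qmult_e1)
  also have "\<dots> = t *\<^sub>R qmult u y"
    using linear_qmult[of u] by (simp add: ty(4) linear_scale)
  finally have "u + w = t *\<^sub>R qmult u y" .
  moreover have "qmult u ` (convex hull V600) \<subseteq> convex hull V600"
    using V600_qmult[OF assms(1)] by (simp add: convex_hull_linear_image[OF linear_qmult] hull_mono image_subset_iff)
  ultimately show ?thesis using that ty by blast
qed

lemma no_induced_square_adj600: "no_induced_square V600 adj600"
  unfolding no_induced_square_def
proof (intro ballI impI)
  fix a b c d
  assume V: "a \<in> V600" "b \<in> V600" "c \<in> V600" "d \<in> V600"
    and square: "adj600 a b \<and> adj600 b c \<and> adj600 c d \<and> adj600 d a \<and> a \<noteq> c \<and> b \<noteq> d"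
  let ?T = "qmult (qconj_vec a)"
  note T = qconj_vec_qmult_V600[OF V(1)]
  have adj_T: "adj600 (?T x) (?T y) \<longleftrightarrow> adj600 x y" for x y
    unfolding adj600_def T(3) ..
  have inj_T: "?T x = ?T y \<longleftrightarrow> x = y" for x y
  proof
    assume "?T x = ?T y"
    then have "qmult a (?T x) = qmult a (?T y)" by simp
    then show "x = y" by (simp only: T(4))
  qed simp
  show "adj600 a c \<or> adj600 b d"
  proof (rule disjCI)
    assume "\<not> adj600 b d"
    have "adj600 e1 (?T c)"
    proof (rule e1_square_chord)
      show "?T b \<in> V600" "?T c \<in> V600" "?T d \<in> V600" using T(2) V by auto
      have "adj600 a d" using square symp_adj600 by (blast dest: sympD)
      then show "adj600 e1 (?T b)" "adj600 e1 (?T d)" "adj600 (?T b) (?T c)" "adj600 (?T c) (?T d)"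
        "?T b \<noteq> ?T d" "\<not> adj600 (?T b) (?T d)" "?T c \<noteq> e1"
        using square \<open>\<not> adj600 b d\<close> unfolding T(1)[symmetric] adj_T inj_T by auto
    qed
    then show "adj600 a c" unfolding T(1)[symmetric] adj_T .
  qed
qed

lemma span_V600: "span V600 = UNIV"
proof -
  have "axis i 1 \<in> V600" for i :: 4
  proof -
    have "axis i 1 = vert (2, 0, 0, 0) \<or> axis i 1 = vert (0, 2, 0, 0) \<or>
          axis i 1 = vert (0, 0, 2, 0) \<or> axis i 1 = vert (0, 0, 0, 2)"
      using exhaust_4[of i] by (auto simp: vert_eq vec4_eq_iff axis_def)
    then show ?thesis using axis_vertex_in_V600 by (auto simp: axis_vertices_def)
  qed
  then have "Basis \<subseteq> V600" by (auto simp: Basis_vec_def)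
  then show ?thesis by (metis span_Basis span_mono top.extremum_uniqueI)
qed

lemma proper_face_clique:
  assumes "F face_of convex hull V600" "F \<noteq> {}" "F \<noteq> convex hull V600"
  shows "V600 \<inter> F \<in> clique_complex V600 adj600"
proof -
  obtain S where S: "S \<subseteq> V600" "F = convex hull S"
    by (rule face_of_convex_hull_subset[OF finite_imp_compact[OF finite_V600] assms(1)])
  have "S \<noteq> {}" using assms(2) S(2) by auto
  then have "V600 \<inter> F \<noteq> {}" using S hull_subset[of S convex] by blast
  moreover have "adj600 x y" if xy: "x \<in> V600 \<inter> F" "y \<in> V600 \<inter> F" "x \<noteq> y" for x y
  proof (rule ccontr)
    assume "\<not> adj600 x y"
    obtain t z where "0 \<le> t" "t < 2" "z \<in> convex hull V600" "x + y = t *\<^sub>R z"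
      by (rule V600_midpoint_shrunk[of x y]) (use xy \<open>\<not> adj600 x y\<close> in auto)
    then show False
      using proper_face_avoids_shrunk_midpoints[OF convex_convex_hull _ assms(1,3)] xy
        zero_in_interior_convex_hull[OF V600_uminus span_V600] by blast
  qed
  ultimately show ?thesis by (auto simp: clique_complex_def)
qed

lemma clique_proper_face:
  assumes clique: "\<sigma> \<in> clique_complex V600 adj600"
  obtains F where "F face_of convex hull V600" "F \<noteq> {}" "F \<noteq> convex hull V600" "\<sigma> = V600 \<inter> F"
proof -
  have \<sigma>: "\<sigma> \<noteq> {}" "\<sigma> \<subseteq> V600"
    using clique unfolding clique_complex_def by blast+
  have equilateral: "x \<bullet> y = golden / 2" if "x \<in> \<sigma>" "y \<in> \<sigma>" "x \<noteq> y" for x y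
  proof -
    have "adj600 x y" using clique that unfolding clique_complex_def by blast
    then show ?thesis unfolding adj600_def .
  qed
  obtain F where F: "F face_of convex hull V600" "V600 \<inter> F = \<sigma>"
    by (rule equilateral_subset_face[OF finite_subset[OF \<sigma>(2) finite_V600] \<sigma>(2) _ V600_unit V600_inner_le equilateral])
       (use golden_bounds in auto)
  have "\<not> V600 \<subseteq> \<sigma>"
  proof
    assume "V600 \<subseteq> \<sigma>"
    moreover have "e1 \<noteq> - e1" by (simp add: e1_def quat_vec_def vec4_eq_iff)
    ultimately have "e1 \<bullet> - e1 = golden / 2" using equilateral e1_in_V600 V600_uminus by blast
    then show False using V600_unit[OF e1_in_V600] golden_bounds by simp
  qed
  then have "F \<noteq> convex hull V600" using F(2) hull_subset[of V600 convex] by blast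
  moreover have "F \<noteq> {}" using F(2) \<sigma>(1) by blast
  ultimately show ?thesis using that F by blast
qed

theorem X600_clique_complex: "X600 = clique_complex V600 adj600"
proof (intro equalityI subsetI)
  fix \<sigma> assume "\<sigma> \<in> X600"
  then obtain F where "\<sigma> = V600 \<inter> F" "F face_of convex hull V600" "F \<noteq> {}" "F \<noteq> convex hull V600"
    unfolding X600_def by blast
  then show "\<sigma> \<in> clique_complex V600 adj600" using proper_face_clique by simp
next
  fix \<sigma> assume "\<sigma> \<in> clique_complex V600 adj600"
  then obtain F where "F face_of convex hull V600" "F \<noteq> {}" "F \<noteq> convex hull V600" "\<sigma> = V600 \<inter> F"
    by (rule clique_proper_face)
  then show "\<sigma> \<in> X600" unfolding X600_def by blast
qed

theorem lemma4p8:
  assumes "v \<in> V600"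
  shows "flag_no_square (X580 v) \<and> three_convex (bdry580 v) (X580 v)"
proof -
  have X580: "X580 v = clique_complex (V600 - {v}) adj600"
    unfolding X580_def X600_clique_complex by (rule clique_complex_delete)
  have bdry580: "bdry580 v = clique_complex {x \<in> V600. x \<noteq> v \<and> adj600 v x} adj600"
    unfolding bdry580_def X600_clique_complex by (rule clique_complex_link[OF symp_adj600 assms])
  have "flag_no_square (clique_complex (V600 - {v}) adj600)"
    using no_induced_square_mono[OF no_induced_square_adj600]
    by (intro flag_no_square_clique_complex[OF symp_adj600]) blast
  moreover have "three_convex (clique_complex {x \<in> V600. x \<noteq> v \<and> adj600 v x} adj600)
                              (clique_complex (V600 - {v}) adj600)"
    by (rule three_convex_link[OF symp_adj600 assms no_induced_square_adj600])
  ultimately show ?thesis unfolding X580 bdry580 ..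
qed

end
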